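(* Let $G$ be a connected graph and $(T,\mathcal V)$, $\mathcal V=(V_t : t \in T)$, a normal semi-partition tree of $G$. Then: (1) for incomparable $t,t' \in T$, the set $V(\lceil t\rceil \cap \lceil t'\rceil)$ separates $V_t$ from $V_{t'}$ in $G$; (2) for every connected subgraph $H$ of $G$ meeting $G(T)$ there is a unique $\le_T$-minimal element $t \in T$ with $V_t \cap V(H) \ne \emptyset$; (3) if $T' \subseteq T$ is down-closed, then every component of $G(T) - G(T')$ is $G(\lfloor t\rfloor)$ for some $t$ minimal in $T \setminus T'$; (4) if $T' \subseteq T$ is down-closed, then for every component $C$ of $G - G(T')$ that meets $G(T)$, the graph $C \cap G(T)$ is a component of $G(T) - G(T')$.
   Context: An order tree is a poset $(T,\le)$ with a unique minimal element (root) in which every down-closure $\lceil t\rceil=\{t'\le t\}$ is well-ordered; write $\mathring{\lceil t\rceil}=\lceil t\rceil\setminus\{t\}$, $\lfloor t\rfloor = \{t' \in T: t' \ge t\}$. A set $X\subseteq T$ is down-closed (a rooted subtree) if it equals its down-closure. For an order tree $T$, a $T$-graph is a graph on vertex set $T$ in which the endvertices of every edge are comparable and, for each $t$, the set of neighbours of $t$ below $t$ is cofinal in $\mathring{\lceil t\rceil}$. For a graph $G$ and family $\mathcal V=(V_t: t\in T)$ of nonempty vertex sets, $(T,\mathcal V)$ is a normal semi-partition tree of $G$ if: (a) the $V_t$ are pairwise disjoint; (b) each $G[V_t]$ is connected; (c) the graph obtained from $G[\bigcup\mathcal V]$ by contracting each $V_t$ to a single vertex $t$ (deleting loops and parallel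 edges) is a $T$-graph; (d) for every $\bigcup\mathcal V$-path $P$ in $G$ (a path with at least one edge, endvertices in $\bigcup \mathcal V$, inner vertices outside $\bigcup\mathcal V$, and no edge inside $G[\bigcup\mathcal V]$) with endvertices in $V_t$ and $V_{t'}$, the nodes $t,t'$ are comparable. For $S\subseteq T$ put $V(S)=\bigcup_{t\in S}V_t$ and $G(S)=G[V(S)]$. *)

theory Defs
  imports Main
begin

definition graph :: "'v set \<Rightarrow> ('v \<Rightarrow> 'v \<Rightarrow> bool) \<Rightarrow> bool" where
  "graph V adj \<longleftrightarrow> (\<forall>x y. adj x y \<longrightarrow> x \<in> V \<and> y \<in> V \<and> x \<noteq> y \<and> adj y x)"

definition subgraph :: "'v set \<Rightarrow> ('v \<Rightarrow> 'v \<Rightarrow> bool) \<Rightarrow> 'v set \<Rightarrow> ('v \<Rightarrow> 'v \<Rightarrow> bool) \<Rightarrow> bool" where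
  "subgraph W F V adj \<longleftrightarrow> graph W F \<and> W \<subseteq> V \<and> (\<forall>x y. F x y \<longrightarrow> adj x y)"

definition connected_graph :: "'v set \<Rightarrow> ('v \<Rightarrow> 'v \<Rightarrow> bool) \<Rightarrow> bool" where
  "connected_graph W F \<longleftrightarrow> W \<noteq> {} \<and>
     (\<forall>x\<in>W. \<forall>y\<in>W. (\<lambda>a b. F a b \<and> a \<in> W \<and> b \<in> W)\<^sup>*\<^sup>* x y)"

abbreviation connected_in :: "('v \<Rightarrow> 'v \<Rightarrow> bool) \<Rightarrow> 'v set \<Rightarrow> bool" where
  "connected_in adj X \<equiv> connected_graph X adj"

text \<open>C is (the vertex set of) a component of the induced subgraph G[X].
Components of induced subgraphs are induced subgraphs, so they are determined
by their vertex sets.\<close>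
definition component_of :: "('v \<Rightarrow> 'v \<Rightarrow> bool) \<Rightarrow> 'v set \<Rightarrow> 'v set \<Rightarrow> bool" where
  "component_of adj X C \<longleftrightarrow> C \<subseteq> X \<and> connected_in adj C \<and>
     (\<forall>D. C \<subseteq> D \<and> D \<subseteq> X \<and> connected_in adj D \<longrightarrow> D = C)"

definition gpath :: "('v \<Rightarrow> 'v \<Rightarrow> bool) \<Rightarrow> 'v list \<Rightarrow> bool" where
  "gpath adj p \<longleftrightarrow> p \<noteq> [] \<and> distinct p \<and>
     (\<forall>i. Suc i < length p \<longrightarrow> adj (p ! i) (p ! Suc i))"

definition separates :: "('v \<Rightarrow> 'v \<Rightarrow> bool) \<Rightarrow> 'v set \<Rightarrow> 'v set \<Rightarrow> 'v set \<Rightarrow> bool" where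
  "separates adj X A B \<longleftrightarrow>
     (\<forall>p. gpath adj p \<and> hd p \<in> A \<and> last p \<in> B \<longrightarrow> set p \<inter> X \<noteq> {})"

definition rel_on :: "'t set \<Rightarrow> ('t \<Rightarrow> 't \<Rightarrow> bool) \<Rightarrow> ('t \<times> 't) set" where
  "rel_on A le = {(x, y). x \<in> A \<and> y \<in> A \<and> le x y}"

text \<open>Down-closure \<lceil>t\<rceil>, strict down-closure, and up-closure \<lfloor>t\<rfloor>.\<close>
definition down :: "'t set \<Rightarrow> ('t \<Rightarrow> 't \<Rightarrow> bool) \<Rightarrow> 't \<Rightarrow> 't set" where
  "down T le t = {s \<in> T. le s t}"

definition sdown :: "'t set \<Rightarrow> ('t \<Rightarrow> 't \<Rightarrow> bool) \<Rightarrow> 't \<Rightarrow> 't set" where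
  "sdown T le t = down T le t - {t}"

definition up :: "'t set \<Rightarrow> ('t \<Rightarrow> 't \<Rightarrow> bool) \<Rightarrow> 't \<Rightarrow> 't set" where
  "up T le t = {s \<in> T. le t s}"

definition order_tree :: "'t set \<Rightarrow> ('t \<Rightarrow> 't \<Rightarrow> bool) \<Rightarrow> bool" where
  "order_tree T le \<longleftrightarrow>
     partial_order_on T (rel_on T le) \<and>
     (\<exists>!r. r \<in> T \<and> (\<forall>s\<in>T. le s r \<longrightarrow> s = r)) \<and>
     (\<forall>t\<in>T. well_order_on (down T le t) (rel_on (down T le t) le))"

definition down_closed :: "'t set \<Rightarrow> ('t \<Rightarrow> 't \<Rightarrow> bool) \<Rightarrow> 't set \<Rightarrow> bool" where
  "down_closed T le X \<longleftrightarrow> X \<subseteq> T \<and> (\<forall>t\<in>X. down T le t \<subseteq> X)"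

definition comparable :: "('t \<Rightarrow> 't \<Rightarrow> bool) \<Rightarrow> 't \<Rightarrow> 't \<Rightarrow> bool" where
  "comparable le s t \<longleftrightarrow> le s t \<or> le t s"

definition T_graph :: "'t set \<Rightarrow> ('t \<Rightarrow> 't \<Rightarrow> bool) \<Rightarrow> ('t \<Rightarrow> 't \<Rightarrow> bool) \<Rightarrow> bool" where
  "T_graph T le tadj \<longleftrightarrow> graph T tadj \<and>
     (\<forall>s t. tadj s t \<longrightarrow> comparable le s t) \<and>
     (\<forall>t\<in>T. \<forall>s\<in>sdown T le t. \<exists>u\<in>sdown T le t. tadj u t \<and> le s u)"

definition Vof :: "('t \<Rightarrow> 'v set) \<Rightarrow> 't set \<Rightarrow> 'v set" where
  "Vof Vt S = (\<Union>t\<in>S. Vt t)"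

definition contracted_adj :: "('v \<Rightarrow> 'v \<Rightarrow> bool) \<Rightarrow> 't set \<Rightarrow> ('t \<Rightarrow> 'v set) \<Rightarrow> 't \<Rightarrow> 't \<Rightarrow> bool" where
  "contracted_adj adj T Vt s t \<longleftrightarrow> s \<in> T \<and> t \<in> T \<and> s \<noteq> t \<and>
     (\<exists>x\<in>Vt s. \<exists>y\<in>Vt t. adj x y)"

definition U_path :: "('v \<Rightarrow> 'v \<Rightarrow> bool) \<Rightarrow> 'v set \<Rightarrow> 'v list \<Rightarrow> bool" where
  "U_path adj U p \<longleftrightarrow> gpath adj p \<and> length p \<ge> 2 \<and>
     hd p \<in> U \<and> last p \<in> U \<and>
     (\<forall>i. 0 < i \<and> i < length p - 1 \<longrightarrow> p ! i \<notin> U) \<and>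
     (\<forall>i. Suc i < length p \<longrightarrow> \<not> (p ! i \<in> U \<and> p ! Suc i \<in> U))"

definition normal_semi_partition_tree ::
  "'v set \<Rightarrow> ('v \<Rightarrow> 'v \<Rightarrow> bool) \<Rightarrow> 't set \<Rightarrow> ('t \<Rightarrow> 't \<Rightarrow> bool) \<Rightarrow> ('t \<Rightarrow> 'v set) \<Rightarrow> bool" where
  "normal_semi_partition_tree V adj T le Vt \<longleftrightarrow>
     order_tree T le \<and>
     (\<forall>t\<in>T. Vt t \<noteq> {} \<and> Vt t \<subseteq> V) \<and>
     (\<forall>s\<in>T. \<forall>t\<in>T. s \<noteq> t \<longrightarrow> Vt s \<inter> Vt t = {}) \<and>
     (\<forall>t\<in>T. connected_in adj (Vt t)) \<and>
     T_graph T le (contracted_adj adj T Vt) \<and>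
     (\<forall>p s t. U_path adj (Vof Vt T) p \<and> s \<in> T \<and> t \<in> T \<and>
        hd p \<in> Vt s \<and> last p \<in> Vt t \<longrightarrow> comparable le s t)"

end

theory Submission
  imports Defs
begin

(* Suppose a walk starts in V(up t0) and avoids V(sdown t0).  Between two
   consecutive visits of the walk to V(T), in V_s and V_s', it uses an edge or a
   V(T)-path, so s and s' are comparable; if t0 <= s, then s' is not strictly below t0,
   and since the down-closure of s is a chain this forces t0 <= s'.  Hence every vertex of
   V(T) on the walk lies in V(up t0).  Taking t0 minimal in down t - down t' gives (1)
   and (2); taking t0 minimal in T - T' shows that the connected sets V(up t0) are exactly
   the components of G(T) - G(T'), which gives (3) and (4). *)

lemma gpath_iff_successively: "gpath adj p \<longleftrightarrow> p \<noteq> [] \<and> distinct p \<and> successively adj p"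
  by (simp add: gpath_def successively_conv_nth)

lemma successively_rtranclp: "successively R xs \<Longrightarrow> xs \<noteq> [] \<Longrightarrow> R\<^sup>*\<^sup>* (hd xs) (last xs)"
  by (induction R xs rule: successively.induct) (auto intro: converse_rtranclp_into_rtranclp)

lemma gpath_rtranclp: "gpath adj p \<Longrightarrow> (\<lambda>a b. adj a b \<and> b \<in> set p)\<^sup>*\<^sup>* (hd p) (last p)"
  unfolding gpath_iff_successively
  by (blast intro: successively_rtranclp successively_mono)

lemma rtranclp_imp_gpath:
  assumes "(\<lambda>a b. adj a b \<and> a \<in> P \<and> b \<in> P)\<^sup>*\<^sup>* x y" "x \<in> P"
  shows "\<exists>q. gpath adj q \<and> hd q = x \<and> last q = y \<and> set q \<subseteq> P"
  using assms
proof (induction rule: converse_rtranclp_induct)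
  case base
  then show ?case by (intro exI[of _ "[y]"]) (simp add: gpath_def)
next
  case (step x x')
  then obtain q where q: "gpath adj q" "hd q = x'" "last q = y" "set q \<subseteq> P" by auto
  show ?case
  proof (cases "x \<in> set q")
    case True
    then obtain q1 q2 where "q = q1 @ x # q2" by (meson split_list)
    then show ?thesis
      using q by (intro exI[of _ "x # q2"]) (auto simp: gpath_iff_successively successively_append_iff)
  next
    case False
    then show ?thesis
      using q step by (intro exI[of _ "x # q"]) (auto simp: gpath_iff_successively successively_Cons)
  qed
qed

lemma U_path_detour:
  assumes q: "gpath adj q" "set q \<inter> U = {}" and ends: "a \<in> U" "y \<in> U" "a \<noteq> y"
    and edges: "adj a (hd q)" "adj (last q) y"
  shows "U_path adj U (a # q @ [y])"
proof -
  let ?p = "a # q @ [y]"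
  have "q \<noteq> []" using q(1) by (simp add: gpath_def)
  have inner: "?p ! i \<notin> U" if "0 < i" "i \<le> length q" for i
  proof -
    have "?p ! i = q ! (i - 1)" using that by (cases i) (auto simp: nth_append)
    moreover have "i - 1 < length q" using that by linarith
    ultimately have "?p ! i \<in> set q" by (metis nth_mem)
    then show ?thesis using q(2) by blast
  qed
  have "gpath adj ?p"
    using q ends edges by (auto simp: gpath_iff_successively successively_append_iff successively_Cons)
  moreover have "\<not> (?p ! i \<in> U \<and> ?p ! Suc i \<in> U)" if "Suc i < length ?p" for i
  proof (cases i)
    case 0
    then show ?thesis using inner[of 1] \<open>q \<noteq> []\<close> by (simp add: Suc_le_eq)
  next
    case (Suc j)
    then show ?thesis using inner[of i] that by simp
  qed
  moreover have "length ?p \<ge> 2" using \<open>q \<noteq> []\<close> by simp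
  ultimately show ?thesis
    using ends inner unfolding U_path_def by simp
qed

lemma connected_in_Un:
  assumes A: "connected_in adj A" and B: "connected_in adj B" and AB: "A \<inter> B \<noteq> {}"
  shows "connected_in adj (A \<union> B)"
proof -
  let ?R = "\<lambda>a b. adj a b \<and> a \<in> A \<union> B \<and> b \<in> A \<union> B"
  obtain c where c: "c \<in> A" "c \<in> B" using AB by blast
  have part: "?R\<^sup>*\<^sup>* x y" if "connected_in adj X" "X \<subseteq> A \<union> B" "x \<in> X" "y \<in> X" for X x y
  proof -
    have "(\<lambda>a b. adj a b \<and> a \<in> X \<and> b \<in> X)\<^sup>*\<^sup>* x y"
      using that unfolding connected_graph_def by blast
    then show ?thesis
      by (rule mono_rtranclp[rule_format, rotated]) (use that in blast)
  qed
  have to_c: "?R\<^sup>*\<^sup>* x c \<and> ?R\<^sup>*\<^sup>* c x" if "x \<in> A \<union> B" for x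
  proof (cases "x \<in> A")
    case True
    then show ?thesis using part[OF A Un_upper1] c(1) by blast
  next
    case False
    then show ?thesis using part[OF B Un_upper2] c(2) that by blast
  qed
  have "?R\<^sup>*\<^sup>* x y" if "x \<in> A \<union> B" "y \<in> A \<union> B" for x y
    using to_c[OF that(1)] to_c[OF that(2)] by (blast intro: rtranclp_trans)
  then show ?thesis
    unfolding connected_graph_def using c by blast
qed

lemma component_of_absorbs:
  assumes C: "component_of adj X C" and D: "connected_in adj D" "D \<subseteq> X" and CD: "C \<inter> D \<noteq> {}"
  shows "D \<subseteq> C"
proof -
  have "C \<subseteq> X" "connected_in adj C"
    and max: "\<And>D'. C \<subseteq> D' \<Longrightarrow> D' \<subseteq> X \<Longrightarrow> connected_in adj D' \<Longrightarrow> D' = C"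
    using C unfolding component_of_def by auto
  then have "C \<union> D = C"
    using D CD connected_in_Un[of C adj D] by (intro max) auto
  then show ?thesis by blast
qed

lemma connected_graphI_root:
  assumes sym: "\<And>a b. F a b \<Longrightarrow> F b a" and "r \<in> W"
    and reach: "\<And>x. x \<in> W \<Longrightarrow> (\<lambda>a b. F a b \<and> a \<in> W \<and> b \<in> W)\<^sup>*\<^sup>* r x"
  shows "connected_graph W F"
proof -
  let ?R = "\<lambda>a b. F a b \<and> a \<in> W \<and> b \<in> W"
  have "symp ?R"
    using sym by (intro sympI) blast
  then have sym_reach: "symp ?R\<^sup>*\<^sup>*"
    by (rule symp_rtranclp)
  have "?R\<^sup>*\<^sup>* x y" if "x \<in> W" "y \<in> W" for x y
    using rtranclp_trans[OF sympD[OF sym_reach reach[OF that(1)]] reach[OF that(2)]] .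
  then show ?thesis
    unfolding connected_graph_def using \<open>r \<in> W\<close> by blast
qed

lemma order_tree_refl: "order_tree T le \<Longrightarrow> t \<in> T \<Longrightarrow> le t t"
  unfolding order_tree_def partial_order_on_def preorder_on_def refl_on_def rel_on_def by auto

lemma order_tree_trans:
  "order_tree T le \<Longrightarrow> a \<in> T \<Longrightarrow> b \<in> T \<Longrightarrow> c \<in> T \<Longrightarrow> le a b \<Longrightarrow> le b c \<Longrightarrow> le a c"
  unfolding order_tree_def partial_order_on_def preorder_on_def trans_def rel_on_def by blast

lemma order_tree_down_comparable:
  assumes "order_tree T le" "s \<in> T" "a \<in> T" "b \<in> T" "le a s" "le b s"
  shows "comparable le a b"
proof -
  have "total_on (down T le s) (rel_on (down T le s) le)"
    using assms(1,2) unfolding order_tree_def well_order_on_def linear_order_on_def by blast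
  then show ?thesis
    using assms order_tree_refl[of T le a]
    unfolding total_on_def rel_on_def down_def comparable_def by auto
qed

lemma order_tree_minimal_below:
  assumes tree: "order_tree T le" and "Q \<subseteq> T" "q \<in> Q"
  shows "\<exists>m\<in>Q. le m q \<and> (\<forall>u\<in>Q. le u m \<longrightarrow> u = m)"
proof -
  let ?D = "down T le q"
  have "wf (rel_on ?D le - Id)"
    using tree assms(2,3) unfolding order_tree_def well_order_on_def by blast
  moreover have "q \<in> {u \<in> Q. le u q}"
    using assms order_tree_refl[OF tree] by blast
  ultimately obtain m where m: "m \<in> Q" "le m q"
    and min: "\<And>u. (u, m) \<in> rel_on ?D le - Id \<Longrightarrow> u \<notin> {u \<in> Q. le u q}"
    unfolding wf_eq_minimal by (metis (no_types, lifting) mem_Collect_eq)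
  have "u = m" if "u \<in> Q" "le u m" for u
  proof -
    have "le u q" using order_tree_trans[OF tree] that m assms(2,3) by blast
    then show ?thesis
      using min[of u] that m assms(2,3) unfolding rel_on_def down_def by blast
  qed
  then show ?thesis using m by blast
qed

lemma order_tree_wf:
  assumes "order_tree T le"
  shows "wf {(a, b). a \<in> T \<and> b \<in> T \<and> le a b \<and> a \<noteq> b}"
  unfolding wf_eq_minimal
proof (intro allI impI)
  fix x and Q :: "'a set"
  assume "x \<in> Q"
  show "\<exists>z\<in>Q. \<forall>y. (y, z) \<in> {(a, b). a \<in> T \<and> b \<in> T \<and> le a b \<and> a \<noteq> b} \<longrightarrow> y \<notin> Q"
  proof (cases "x \<in> T")
    case True
    then obtain m where "m \<in> Q \<inter> T" "\<forall>u\<in>Q \<inter> T. le u m \<longrightarrow> u = m"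
      using order_tree_minimal_below[OF assms, of "Q \<inter> T" x] \<open>x \<in> Q\<close> by blast
    then show ?thesis by blast
  qed (use \<open>x \<in> Q\<close> in blast)
qed

lemma order_tree_above_if_comparable:
  assumes tree: "order_tree T le" and "t \<in> T" "s \<in> T" "s' \<in> T"
    and "le t s" "comparable le s s'" "s' \<notin> sdown T le t"
  shows "le t s'"
proof (cases "le s s'")
  case True
  then show ?thesis using assms order_tree_trans[OF tree] by blast
next
  case False
  then have "comparable le t s'"
    using assms order_tree_down_comparable[OF tree, of s t s'] unfolding comparable_def by blast
  then show ?thesis
    using assms order_tree_refl[OF tree] unfolding comparable_def sdown_def down_def by blast
qed

lemma order_tree_minimal_outside:
  assumes tree: "order_tree T le" and t: "t \<in> T" "t \<notin> D"
  shows "\<exists>t0\<in>T. le t0 t \<and> t0 \<notin> D \<and> sdown T le t0 \<subseteq> D"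
proof -
  have "t \<in> down T le t - D"
    using t order_tree_refl[OF tree] unfolding down_def by blast
  then obtain t0 where t0: "t0 \<in> down T le t - D"
    and min: "\<forall>u \<in> down T le t - D. le u t0 \<longrightarrow> u = t0"
    using order_tree_minimal_below[OF tree, of "down T le t - D" t] unfolding down_def by blast
  have "u \<in> D" if "u \<in> sdown T le t0" for u
  proof -
    have u: "u \<in> T" "le u t0" "u \<noteq> t0"
      using that unfolding sdown_def down_def by auto
    then have "le u t"
      using order_tree_trans[OF tree] t0 t unfolding down_def by blast
    then show ?thesis
      using min u unfolding down_def by blast
  qed
  then show ?thesis
    using t0 unfolding down_def by blast
qed

locale nspt =
  fixes V :: "'v set" and adj :: "'v \<Rightarrow> 'v \<Rightarrow> bool"
    and T :: "'t set" and le :: "'t \<Rightarrow> 't \<Rightarrow> bool" and Vt :: "'t \<Rightarrow> 'v set"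
  assumes graph: "graph V adj"
    and normal: "normal_semi_partition_tree V adj T le Vt"
begin

lemma tree: "order_tree T le"
  using normal by (simp add: normal_semi_partition_tree_def)

lemma Vt_nonempty: "t \<in> T \<Longrightarrow> Vt t \<noteq> {}"
  using normal by (simp add: normal_semi_partition_tree_def)

lemma Vt_subset: "t \<in> T \<Longrightarrow> Vt t \<subseteq> V"
  using normal by (simp add: normal_semi_partition_tree_def)

lemma Vt_disjoint: "s \<in> T \<Longrightarrow> t \<in> T \<Longrightarrow> x \<in> Vt s \<Longrightarrow> x \<in> Vt t \<Longrightarrow> s = t"
  using normal unfolding normal_semi_partition_tree_def by blast

lemma Vt_connected: "t \<in> T \<Longrightarrow> connected_in adj (Vt t)"
  using normal by (simp add: normal_semi_partition_tree_def)

lemma contracted_T_graph: "T_graph T le (contracted_adj adj T Vt)"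
  using normal by (simp add: normal_semi_partition_tree_def)

lemma U_path_comparable:
  "U_path adj (Vof Vt T) p \<Longrightarrow> s \<in> T \<Longrightarrow> t \<in> T \<Longrightarrow> hd p \<in> Vt s \<Longrightarrow> last p \<in> Vt t
    \<Longrightarrow> comparable le s t"
  using normal unfolding normal_semi_partition_tree_def by blast

lemma adj_sym: "adj a b \<Longrightarrow> adj b a"
  using graph unfolding graph_def by blast

lemma Vt_subset_Vof_up: "s \<in> T \<Longrightarrow> le t s \<Longrightarrow> Vt s \<subseteq> Vof Vt (up T le t)"
  by (auto simp: Vof_def up_def)

lemma adj_comparable:
  assumes "s \<in> T" "s' \<in> T" "x \<in> Vt s" "y \<in> Vt s'" "adj x y"
  shows "comparable le s s'"
proof (cases "s = s'")
  case True
  then show ?thesis using order_tree_refl[OF tree] assms unfolding comparable_def by blast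
next
  case False
  then have "contracted_adj adj T Vt s s'"
    using assms unfolding contracted_adj_def by blast
  then show ?thesis using contracted_T_graph unfolding T_graph_def by blast
qed

lemma detour_comparable:
  assumes "s \<in> T" "s' \<in> T" "a \<in> Vt s" "y \<in> Vt s'"
    and "adj a w" "w \<notin> Vof Vt T"
    and walk: "(\<lambda>u v. adj u v \<and> u \<notin> Vof Vt T \<and> v \<notin> Vof Vt T)\<^sup>*\<^sup>* w x" and "adj x y"
  shows "comparable le s s'"
proof (cases "a = y")
  case True
  then show ?thesis
    using assms Vt_disjoint order_tree_refl[OF tree] unfolding comparable_def by blast
next
  case False
  obtain q where q: "gpath adj q" "hd q = w" "last q = x" "set q \<subseteq> - Vof Vt T"
    using rtranclp_imp_gpath[of adj "- Vof Vt T" w x] walk \<open>w \<notin> Vof Vt T\<close> by auto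
  have "a \<in> Vof Vt T" "y \<in> Vof Vt T" "set q \<inter> Vof Vt T = {}"
    using assms(1-4) q(4) unfolding Vof_def by auto
  then have "U_path adj (Vof Vt T) (a # q @ [y])"
    using U_path_detour[OF q(1)] q(2,3) False \<open>adj a w\<close> \<open>adj x y\<close> by simp
  then show ?thesis
    using U_path_comparable[OF _ assms(1,2)] assms(3,4) by simp
qed

lemma up_reachable:
  assumes t: "t \<in> T" and r: "r \<in> Vt t" and s: "s \<in> T" "le t s"
  shows "\<forall>x \<in> Vt s. (\<lambda>a b. adj a b \<and> a \<in> Vof Vt (up T le t) \<and> b \<in> Vof Vt (up T le t))\<^sup>*\<^sup>* r x"
  using s
proof (induction s rule: wf_induct[OF order_tree_wf[OF tree]])
  case (1 s)
  let ?R = "\<lambda>a b. adj a b \<and> a \<in> Vof Vt (up T le t) \<and> b \<in> Vof Vt (up T le t)"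
  have inside: "?R\<^sup>*\<^sup>* a b" if "a \<in> Vt s" "b \<in> Vt s" for a b
  proof -
    have "(\<lambda>a b. adj a b \<and> a \<in> Vt s \<and> b \<in> Vt s)\<^sup>*\<^sup>* a b"
      using Vt_connected[OF \<open>s \<in> T\<close>] that unfolding connected_graph_def by blast
    then show ?thesis
      by (rule mono_rtranclp[rule_format, rotated]) (use Vt_subset_Vof_up[OF "1.prems"] in blast)
  qed
  show ?case
  proof (cases "s = t")
    case True
    then show ?thesis using inside r by blast
  next
    case False
    then have "t \<in> sdown T le s"
      using "1.prems" t unfolding sdown_def down_def by auto
    then obtain u where u: "u \<in> sdown T le s" "contracted_adj adj T Vt u s" "le t u"
      using contracted_T_graph "1.prems" unfolding T_graph_def by blast
    then obtain x' y' where x'y': "x' \<in> Vt u" "y' \<in> Vt s" "adj x' y'"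
      unfolding contracted_adj_def by auto
    have "u \<in> T" "le u s" "u \<noteq> s"
      using u unfolding sdown_def down_def by auto
    then have "?R\<^sup>*\<^sup>* r x'"
      using "1.IH"[rule_format, of u] \<open>s \<in> T\<close> u(3) x'y'(1) by blast
    moreover have "?R x' y'"
      using x'y' Vt_subset_Vof_up[OF \<open>u \<in> T\<close> \<open>le t u\<close>] Vt_subset_Vof_up[OF "1.prems"] by auto
    ultimately have "?R\<^sup>*\<^sup>* r y'"
      by (rule rtranclp.rtrancl_into_rtrancl)
    show ?thesis
    proof
      fix x
      assume "x \<in> Vt s"
      show "?R\<^sup>*\<^sup>* r x"
        using rtranclp_trans[OF \<open>?R\<^sup>*\<^sup>* r y'\<close> inside[OF x'y'(2) \<open>x \<in> Vt s\<close>]] .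
    qed
  qed
qed

lemma up_connected:
  assumes t: "t \<in> T"
  shows "connected_in adj (Vof Vt (up T le t))"
proof -
  obtain r where r: "r \<in> Vt t"
    using Vt_nonempty[OF t] by blast
  have "(\<lambda>a b. adj a b \<and> a \<in> Vof Vt (up T le t) \<and> b \<in> Vof Vt (up T le t))\<^sup>*\<^sup>* r x"
    if x: "x \<in> Vof Vt (up T le t)" for x
  proof -
    obtain s where "s \<in> T" "le t s" "x \<in> Vt s"
      using x unfolding Vof_def up_def by blast
    then show ?thesis
      using up_reachable[OF t r] by blast
  qed
  moreover have "r \<in> Vof Vt (up T le t)"
    using r Vt_subset_Vof_up[OF t order_tree_refl[OF tree t]] by blast
  ultimately show ?thesis
    by (intro connected_graphI_root[OF adj_sym])
qed

(* The invariant of walk_from_up_stays_up: whenever a walk from V(up t) is outside V(T),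
   it is at a hanging vertex, so its next step into V(T) completes a V(T)-path that starts
   in V(up t). *)
definition hanging :: "'t \<Rightarrow> 'v set" where
  "hanging t = {v. v \<notin> Vof Vt T \<and> (\<exists>a \<in> Vof Vt (up T le t). \<exists>w. adj a w \<and> w \<notin> Vof Vt T \<and>
     (\<lambda>u v. adj u v \<and> u \<notin> Vof Vt T \<and> v \<notin> Vof Vt T)\<^sup>*\<^sup>* w v)}"

lemma up_or_hanging_adj_comparable:
  assumes x: "x \<in> Vof Vt (up T le t) \<union> hanging t" and xy: "adj x y"
    and s': "s' \<in> T" "y \<in> Vt s'"
  shows "\<exists>s\<in>T. le t s \<and> comparable le s s'"
proof (cases "x \<in> Vof Vt (up T le t)")
  case True
  then obtain s where "s \<in> T" "le t s" "x \<in> Vt s"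
    unfolding Vof_def up_def by auto
  then show ?thesis
    using adj_comparable[OF _ s'(1) _ s'(2) xy] by blast
next
  case False
  then obtain a w where a: "a \<in> Vof Vt (up T le t)" "adj a w" "w \<notin> Vof Vt T"
    "(\<lambda>u v. adj u v \<and> u \<notin> Vof Vt T \<and> v \<notin> Vof Vt T)\<^sup>*\<^sup>* w x"
    using x unfolding hanging_def by blast
  then obtain s where "s \<in> T" "le t s" "a \<in> Vt s"
    unfolding Vof_def up_def by auto
  then show ?thesis
    using detour_comparable[OF _ s'(1) _ s'(2) a(2-4) xy] by blast
qed

lemma up_or_hanging_step:
  assumes t: "t \<in> T" and below: "Vof Vt (sdown T le t) \<subseteq> Z"
    and x: "x \<in> Vof Vt (up T le t) \<union> hanging t" and xy: "adj x y" and y: "y \<notin> Z"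
  shows "y \<in> Vof Vt (up T le t) \<union> hanging t"
proof (cases "y \<in> Vof Vt T")
  case False
  let ?R = "\<lambda>u v. adj u v \<and> u \<notin> Vof Vt T \<and> v \<notin> Vof Vt T"
  show ?thesis
  proof (cases "x \<in> Vof Vt (up T le t)")
    case True
    then show ?thesis
      using \<open>y \<notin> Vof Vt T\<close> xy unfolding hanging_def by blast
  next
    case False
    then obtain a w where a: "a \<in> Vof Vt (up T le t)" "adj a w" "w \<notin> Vof Vt T" "?R\<^sup>*\<^sup>* w x"
      and "x \<notin> Vof Vt T"
      using x unfolding hanging_def by blast
    then have "?R\<^sup>*\<^sup>* w y"
      using xy \<open>y \<notin> Vof Vt T\<close> by (auto intro: rtranclp.rtrancl_into_rtrancl)
    then show ?thesis
      using a \<open>y \<notin> Vof Vt T\<close> unfolding hanging_def by blast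
  qed
next
  case True
  then obtain s' where s': "s' \<in> T" "y \<in> Vt s'"
    unfolding Vof_def by auto
  have "s' \<notin> sdown T le t"
    using below s' y unfolding Vof_def by blast
  moreover obtain s where "s \<in> T" "le t s" "comparable le s s'"
    using up_or_hanging_adj_comparable[OF x xy s'] by blast
  ultimately have "le t s'"
    using order_tree_above_if_comparable[OF tree t] s'(1) by blast
  then show ?thesis
    using Vt_subset_Vof_up[OF s'(1)] s'(2) by blast
qed

lemma walk_from_up_stays_up:
  assumes t: "t \<in> T" and below: "Vof Vt (sdown T le t) \<subseteq> Z"
    and walk: "(\<lambda>a b. adj a b \<and> b \<notin> Z)\<^sup>*\<^sup>* x y"
    and x: "x \<in> Vof Vt (up T le t)" and y: "y \<in> Vof Vt T"
  shows "y \<in> Vof Vt (up T le t)"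
proof -
  from walk have "y \<in> Vof Vt (up T le t) \<union> hanging t"
  proof (induction rule: rtranclp_induct)
    case base
    then show ?case using x by blast
  next
    case (step y z)
    then show ?case using up_or_hanging_step[OF t below] by blast
  qed
  then show ?thesis
    using y unfolding hanging_def by blast
qed

lemma no_walk_avoiding_common_down:
  assumes t: "t \<in> T" and t': "t' \<in> T" and incomparable: "\<not> comparable le t t'"
    and x: "x \<in> Vt t" and y: "y \<in> Vt t'"
    and walk: "(\<lambda>a b. adj a b \<and> b \<notin> Vof Vt (down T le t \<inter> down T le t'))\<^sup>*\<^sup>* x y"
  shows False
proof -
  let ?D = "down T le t \<inter> down T le t'"
  have "t \<notin> ?D"
    using incomparable unfolding down_def comparable_def by blast
  then obtain t0 where t0: "t0 \<in> T" "le t0 t" "t0 \<notin> ?D" "sdown T le t0 \<subseteq> ?D"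
    using order_tree_minimal_outside[OF tree t] by blast
  then have below: "Vof Vt (sdown T le t0) \<subseteq> Vof Vt ?D"
    unfolding Vof_def by blast
  have "x \<in> Vof Vt (up T le t0)"
    using x Vt_subset_Vof_up[OF t \<open>le t0 t\<close>] by blast
  moreover have "y \<in> Vof Vt T"
    using y t' unfolding Vof_def by blast
  ultimately have "y \<in> Vof Vt (up T le t0)"
    using walk_from_up_stays_up[OF t0(1) below walk] by blast
  then obtain s where "s \<in> T" "le t0 s" "y \<in> Vt s"
    unfolding Vof_def up_def by auto
  then have "le t0 t'"
    using Vt_disjoint[OF _ t' _ y] by blast
  then show False
    using t0 unfolding down_def by blast
qed

lemma separates_common_down:
  assumes "t \<in> T" "t' \<in> T" "\<not> comparable le t t'"
  shows "separates adj (Vof Vt (down T le t \<inter> down T le t')) (Vt t) (Vt t')"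
  unfolding separates_def
proof (intro allI impI notI)
  fix p
  assume p: "gpath adj p \<and> hd p \<in> Vt t \<and> last p \<in> Vt t'"
    and avoid: "set p \<inter> Vof Vt (down T le t \<inter> down T le t') = {}"
  have "(\<lambda>a b. adj a b \<and> b \<in> set p)\<^sup>*\<^sup>* (hd p) (last p)"
    using gpath_rtranclp p by blast
  then have "(\<lambda>a b. adj a b \<and> b \<notin> Vof Vt (down T le t \<inter> down T le t'))\<^sup>*\<^sup>* (hd p) (last p)"
    by (rule mono_rtranclp[rule_format, rotated]) (use avoid in blast)
  then show False
    using no_walk_avoiding_common_down assms p by blast
qed

lemma connected_subgraph_comparable:
  assumes W: "subgraph W F V adj" "connected_graph W F"
    and t: "t \<in> T" "x \<in> Vt t \<inter> W" and t': "t' \<in> T" "y \<in> Vt t' \<inter> W"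
    and avoid: "W \<inter> Vof Vt (down T le t \<inter> down T le t') = {}"
  shows "comparable le t t'"
proof (rule ccontr)
  assume incomparable: "\<not> comparable le t t'"
  have "(\<lambda>a b. F a b \<and> a \<in> W \<and> b \<in> W)\<^sup>*\<^sup>* x y"
    using W(2) t(2) t'(2) unfolding connected_graph_def by blast
  then have "(\<lambda>a b. adj a b \<and> b \<notin> Vof Vt (down T le t \<inter> down T le t'))\<^sup>*\<^sup>* x y"
    by (rule mono_rtranclp[rule_format, rotated]) (use W(1) avoid in \<open>auto simp: subgraph_def\<close>)
  then show False
    using no_walk_avoiding_common_down[OF t(1) t'(1) incomparable] t(2) t'(2) by blast
qed

lemma ex1_minimal_meeting:
  assumes W: "subgraph W F V adj" "connected_graph W F" "W \<inter> Vof Vt T \<noteq> {}"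
  shows "\<exists>!t. t \<in> T \<and> Vt t \<inter> W \<noteq> {} \<and> (\<forall>s\<in>T. Vt s \<inter> W \<noteq> {} \<and> le s t \<longrightarrow> s = t)"
proof -
  let ?S = "{t \<in> T. Vt t \<inter> W \<noteq> {}}"
  obtain q where "q \<in> ?S"
    using W(3) unfolding Vof_def by blast
  then obtain m where m: "m \<in> ?S" "\<forall>u\<in>?S. le u m \<longrightarrow> u = m"
    using order_tree_minimal_below[OF tree, of ?S q] by blast
  have unique: "t = t'"
    if t: "t \<in> ?S" "\<forall>s\<in>?S. le s t \<longrightarrow> s = t" and t': "t' \<in> ?S" "\<forall>s\<in>?S. le s t' \<longrightarrow> s = t'"
    for t t'
  proof (rule ccontr)
    assume "t \<noteq> t'"
    then have "W \<inter> Vof Vt (down T le t \<inter> down T le t') = {}"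
      using t t' unfolding Vof_def down_def by blast
    then have "comparable le t t'"
      using connected_subgraph_comparable[OF W(1,2)] t(1) t'(1) by blast
    then show False
      using t t' \<open>t \<noteq> t'\<close> unfolding comparable_def by blast
  qed
  show ?thesis
  proof (rule ex1I[of _ m])
    show "m \<in> T \<and> Vt m \<inter> W \<noteq> {} \<and> (\<forall>s\<in>T. Vt s \<inter> W \<noteq> {} \<and> le s m \<longrightarrow> s = m)"
      using m by blast
  next
    fix t
    assume "t \<in> T \<and> Vt t \<inter> W \<noteq> {} \<and> (\<forall>s\<in>T. Vt s \<inter> W \<noteq> {} \<and> le s t \<longrightarrow> s = t)"
    then show "t = m"
      using unique[of t m] m by blast
  qed
qed

lemma connected_avoiding_meets_up:
  assumes t: "t \<in> T - T'" and min: "\<forall>s\<in>T - T'. le s t \<longrightarrow> s = t"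
    and D: "connected_in adj D" "D \<inter> Vof Vt T' = {}" "D \<inter> Vof Vt (up T le t) \<noteq> {}"
  shows "D \<inter> Vof Vt T \<subseteq> Vof Vt (up T le t)"
proof
  fix y
  assume y: "y \<in> D \<inter> Vof Vt T"
  obtain c where c: "c \<in> D" "c \<in> Vof Vt (up T le t)"
    using D(3) by blast
  have "sdown T le t \<subseteq> T'"
    using min t unfolding sdown_def down_def by blast
  then have below: "Vof Vt (sdown T le t) \<subseteq> Vof Vt T'"
    unfolding Vof_def by blast
  have "(\<lambda>a b. adj a b \<and> a \<in> D \<and> b \<in> D)\<^sup>*\<^sup>* c y"
    using D(1) c y unfolding connected_graph_def by blast
  then have "(\<lambda>a b. adj a b \<and> b \<notin> Vof Vt T')\<^sup>*\<^sup>* c y"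
    by (rule mono_rtranclp[rule_format, rotated]) (use D(2) in blast)
  then show "y \<in> Vof Vt (up T le t)"
    using walk_from_up_stays_up[OF _ below] t c y by blast
qed

lemma up_subset_complement:
  assumes T': "down_closed T le T'" and t: "t \<in> T - T'"
  shows "Vof Vt (up T le t) \<subseteq> Vof Vt T - Vof Vt T'"
proof
  fix x
  assume "x \<in> Vof Vt (up T le t)"
  then obtain s where s: "s \<in> T" "le t s" "x \<in> Vt s"
    unfolding Vof_def up_def by auto
  then have "s \<notin> T'"
    using T' t unfolding down_closed_def down_def by blast
  then have "x \<notin> Vof Vt T'"
    using s T' Vt_disjoint unfolding Vof_def down_closed_def by blast
  then show "x \<in> Vof Vt T - Vof Vt T'"
    using s unfolding Vof_def by auto
qed

lemma component_of_up:
  assumes T': "down_closed T le T'" and t: "t \<in> T - T'"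
    and min: "\<forall>s\<in>T - T'. le s t \<longrightarrow> s = t"
  shows "component_of adj (Vof Vt T - Vof Vt T') (Vof Vt (up T le t))"
  unfolding component_of_def
proof (intro conjI allI impI)
  show "Vof Vt (up T le t) \<subseteq> Vof Vt T - Vof Vt T'"
    using up_subset_complement[OF T' t] .
  show "connected_in adj (Vof Vt (up T le t))"
    using up_connected t by blast
  fix D
  assume D: "Vof Vt (up T le t) \<subseteq> D \<and> D \<subseteq> Vof Vt T - Vof Vt T' \<and> connected_in adj D"
  have "Vof Vt (up T le t) \<noteq> {}"
    using Vt_nonempty order_tree_refl[OF tree] t unfolding Vof_def up_def by blast
  then have "D \<inter> Vof Vt T \<subseteq> Vof Vt (up T le t)"
    using connected_avoiding_meets_up[OF t min] D by blast
  then show "D = Vof Vt (up T le t)"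
    using D by blast
qed

lemma component_of_tree_minus:
  assumes T': "down_closed T le T'" and C: "component_of adj (Vof Vt T - Vof Vt T') C"
  shows "\<exists>t\<in>T - T'. (\<forall>s\<in>T - T'. le s t \<longrightarrow> s = t) \<and> C = Vof Vt (up T le t)"
proof -
  have C_sub: "C \<subseteq> Vof Vt T - Vof Vt T'" and C_conn: "connected_in adj C"
    using C unfolding component_of_def by auto
  then obtain c where c: "c \<in> C"
    unfolding connected_graph_def by blast
  then obtain s where s: "s \<in> T - T'" "c \<in> Vt s"
    using C_sub unfolding Vof_def by blast
  then obtain t where t: "t \<in> T - T'" "le t s" and min: "\<forall>u\<in>T - T'. le u t \<longrightarrow> u = t"
    using order_tree_minimal_below[OF tree, of "T - T'" s] by blast
  have "c \<in> Vof Vt (up T le t)"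
    using s t unfolding Vof_def up_def by auto
  then have "C \<subseteq> Vof Vt (up T le t)"
    using component_of_absorbs[OF component_of_up[OF T' t(1) min] C_conn C_sub] c by blast
  moreover have "Vof Vt (up T le t) \<subseteq> C"
    using component_of_absorbs[OF C up_connected up_subset_complement[OF T' t(1)]]
      \<open>c \<in> Vof Vt (up T le t)\<close> c t(1) by blast
  ultimately show ?thesis
    using t(1) min by blast
qed

lemma component_of_inter_tree:
  assumes T': "down_closed T le T'" and C: "component_of adj (V - Vof Vt T') C"
    and meets: "C \<inter> Vof Vt T \<noteq> {}"
  shows "component_of adj (Vof Vt T - Vof Vt T') (C \<inter> Vof Vt T)"
proof -
  have C_sub: "C \<subseteq> V - Vof Vt T'" and C_conn: "connected_in adj C"
    using C unfolding component_of_def by auto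
  obtain c s where c: "c \<in> C" "s \<in> T" "c \<in> Vt s"
    using meets unfolding Vof_def by blast
  then have "s \<in> T - T'"
    using C_sub unfolding Vof_def by blast
  then obtain t where t: "t \<in> T - T'" "le t s" and min: "\<forall>u\<in>T - T'. le u t \<longrightarrow> u = t"
    using order_tree_minimal_below[OF tree, of "T - T'" s] by blast
  let ?K = "Vof Vt (up T le t)"
  have cK: "c \<in> ?K"
    using c t unfolding Vof_def up_def by auto
  have "?K \<subseteq> V - Vof Vt T'"
    using up_subset_complement[OF T' t(1)] Vt_subset unfolding Vof_def by blast
  then have "?K \<subseteq> C"
    using component_of_absorbs[OF C up_connected] cK c t(1) by blast
  moreover have "C \<inter> Vof Vt T \<subseteq> ?K"
    using connected_avoiding_meets_up[OF t(1) min C_conn] C_sub cK c by blast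
  moreover have "?K \<subseteq> Vof Vt T"
    unfolding Vof_def up_def by blast
  ultimately have "C \<inter> Vof Vt T = ?K"
    by blast
  then show ?thesis
    using component_of_up[OF T' t(1) min] by simp
qed

end

theorem lemma4p1:
  fixes V :: "'v set" and adj :: "'v \<Rightarrow> 'v \<Rightarrow> bool"
    and T :: "'t set" and le :: "'t \<Rightarrow> 't \<Rightarrow> bool" and Vt :: "'t \<Rightarrow> 'v set"
  assumes G: "graph V adj"
    and Gconn: "connected_graph V adj"
    and NSPT: "normal_semi_partition_tree V adj T le Vt"
  shows
    "(\<forall>t\<in>T. \<forall>t'\<in>T. \<not> comparable le t t' \<longrightarrow>
        separates adj (Vof Vt (down T le t \<inter> down T le t')) (Vt t) (Vt t')) \<and>
    (\<forall>W F. subgraph W F V adj \<and> connected_graph W F \<and> W \<inter> Vof Vt T \<noteq> {} \<longrightarrow>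
        (\<exists>!t. t \<in> T \<and> Vt t \<inter> W \<noteq> {} \<and>
              (\<forall>s\<in>T. Vt s \<inter> W \<noteq> {} \<and> le s t \<longrightarrow> s = t))) \<and>
    (\<forall>T'. down_closed T le T' \<longrightarrow>
        (\<forall>C. component_of adj (Vof Vt T - Vof Vt T') C \<longrightarrow>
           (\<exists>t\<in>T - T'. (\<forall>s\<in>T - T'. le s t \<longrightarrow> s = t) \<and> C = Vof Vt (up T le t)))) \<and>
    (\<forall>T'. down_closed T le T' \<longrightarrow>
        (\<forall>C. component_of adj (V - Vof Vt T') C \<and> C \<inter> Vof Vt T \<noteq> {} \<longrightarrow>
           component_of adj (Vof Vt T - Vof Vt T') (C \<inter> Vof Vt T)))"
proof -
  interpret nspt V adj T le Vt
    using G NSPT by unfold_locales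
  show ?thesis
    by (intro conjI allI ballI impI; (elim conjE)?)
      (simp_all add: separates_common_down ex1_minimal_meeting component_of_tree_minus
        component_of_inter_tree)
qed

end
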